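(* Let $X$ be a continuum that is $d(X)$-Baire. Then every nest (family totally ordered by inclusion) of open dense subsets of $X$ has dense intersection.
   Context: A continuum is a nondegenerate compact connected Hausdorff space. $d(X)$ is the least cardinality of a dense subset of $X$; $X$ is $\alpha$-Baire if every family of $\alpha$ many open dense subsets of $X$ has dense intersection. *)

theory Defs
  imports "HOL-Analysis.Analysis" "HOL-Library.Equipollence"
begin

definition continuum :: "'a topology \<Rightarrow> bool" where
  "continuum X \<longleftrightarrow> compact_space X \<and> connected_space X \<and> Hausdorff_space X
     \<and> (\<exists>x\<in>topspace X. \<exists>y\<in>topspace X. x \<noteq> y)"

definition dense_in_space :: "'a topology \<Rightarrow> 'a set \<Rightarrow> bool" where
  "dense_in_space X D \<longleftrightarrow> D \<subseteq> topspace X \<and> X closure_of D = topspace X"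

text \<open>X is alpha-Baire, where the cardinal alpha is given as the cardinality of the set A:
  every family of at most |A| many open dense subsets has dense intersection.\<close>
definition card_Baire :: "'a topology \<Rightarrow> 'b set \<Rightarrow> bool" where
  "card_Baire X A \<longleftrightarrow>
     (\<forall>\<U>. \<U> \<lesssim> A \<and> (\<forall>U\<in>\<U>. openin X U \<and> dense_in_space X U)
        \<longrightarrow> dense_in_space X (topspace X \<inter> \<Inter>\<U>))"

definition density_Baire :: "'a topology \<Rightarrow> bool" where
  "density_Baire X \<longleftrightarrow>
     (\<exists>D. dense_in_space X D \<and> (\<forall>D'. dense_in_space X D' \<longrightarrow> D \<lesssim> D') \<and> card_Baire X D)"

end

theory Submission
  imports Defs
begin

text \<open>Fix a dense set \<open>D\<close> of minimal size, so that \<open>X\<close> is \<open>|D|\<close>-Baire. For every point of \<open>D\<close>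
  outside \<open>\<Inter>\<N>\<close> pick a member of the nest missing it; this gives a subfamily \<open>\<N>'\<close> of
  size at most \<open>|D|\<close>. If some member \<open>U\<close> of the nest lies below all of \<open>\<N>'\<close>, then the dense
  set \<open>U \<inter> D\<close> is contained in \<open>\<Inter>\<N>\<close>. Otherwise, since \<open>\<N>\<close> is a nest, \<open>\<N>'\<close> is coinitial
  in it, so \<open>\<Inter>\<N> = \<Inter>\<N>'\<close>, which is dense by the Baire property.\<close>

lemma dense_in_space_openin_Int:
  assumes "openin X U" "dense_in_space X U" "dense_in_space X D"
  shows "dense_in_space X (U \<inter> D)"
  using assms closure_of_openin_Int_superset[of X U D]
  unfolding dense_in_space_def by (auto dest: openin_subset)

lemma dense_in_space_mono:
  assumes "dense_in_space X A" "A \<subseteq> B" "B \<subseteq> topspace X"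
  shows "dense_in_space X B"
  using assms unfolding dense_in_space_def
  by (metis closure_of_mono closure_of_subset_topspace subset_antisym)

lemma chain_subset_lower_bound_or_coinitial:
  assumes "chain\<^sub>\<subseteq> \<N>" "\<N>' \<subseteq> \<N>"
  obtains U where "U \<in> \<N>" "\<forall>V\<in>\<N>'. U \<subseteq> V"
    | "\<forall>U\<in>\<N>. \<exists>V\<in>\<N>'. V \<subseteq> U"
proof (cases "\<exists>U\<in>\<N>. \<forall>V\<in>\<N>'. U \<subseteq> V")
  case True
  then show thesis
    using that(1) by blast
next
  case False
  have "\<exists>V\<in>\<N>'. V \<subseteq> U" if "U \<in> \<N>" for U
  proof -
    obtain V where "V \<in> \<N>'" "\<not> U \<subseteq> V"
      using False \<open>U \<in> \<N>\<close> by blast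
    then show ?thesis
      using assms \<open>U \<in> \<N>\<close> unfolding chain_subset_def by blast
  qed
  then show thesis
    using that(2) by blast
qed

lemma obtain_small_family_missing_points:
  obtains \<N>' where "\<N>' \<subseteq> \<N>" "\<N>' \<lesssim> D" "\<forall>d\<in>D - \<Inter>\<N>. \<exists>V\<in>\<N>'. d \<notin> V"
proof -
  have "\<forall>d\<in>D - \<Inter>\<N>. \<exists>V. V \<in> \<N> \<and> d \<notin> V"
    by blast
  then obtain f where f: "\<forall>d\<in>D - \<Inter>\<N>. f d \<in> \<N> \<and> d \<notin> f d"
    by (rule bchoice_iff[THEN iffD1, elim_format]) blast
  have "f ` (D - \<Inter>\<N>) \<lesssim> D"
    by (meson Diff_subset image_lepoll lepoll_trans subset_imp_lepoll)
  then show thesis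
    using f by (intro that[of "f ` (D - \<Inter>\<N>)"]) auto
qed

lemma card_Baire_chain_Inter_dense:
  assumes Baire: "card_Baire X D" and D: "dense_in_space X D"
    and chain: "chain\<^sub>\<subseteq> \<N>" and open_dense: "\<forall>U\<in>\<N>. openin X U \<and> dense_in_space X U"
  shows "dense_in_space X (topspace X \<inter> \<Inter>\<N>)"
proof -
  obtain \<N>' where sub: "\<N>' \<subseteq> \<N>" and small: "\<N>' \<lesssim> D"
    and missing: "\<forall>d\<in>D - \<Inter>\<N>. \<exists>V\<in>\<N>'. d \<notin> V"
    using obtain_small_family_missing_points .
  from chain sub show ?thesis
  proof (cases rule: chain_subset_lower_bound_or_coinitial)
    case (1 U)
    have "U \<inter> D \<subseteq> topspace X \<inter> \<Inter>\<N>"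
    proof
      fix x assume x: "x \<in> U \<inter> D"
      then have "x \<in> topspace X"
        using D by (auto simp: dense_in_space_def)
      moreover have "x \<in> \<Inter>\<N>"
        using 1 missing x by blast
      ultimately show "x \<in> topspace X \<inter> \<Inter>\<N>" ..
    qed
    moreover have "dense_in_space X (U \<inter> D)"
      using dense_in_space_openin_Int open_dense \<open>U \<in> \<N>\<close> D by blast
    ultimately show ?thesis
      using dense_in_space_mono by blast
  next
    case 2
    have "\<forall>V\<in>\<N>'. openin X V \<and> dense_in_space X V"
      using sub open_dense by blast
    then have "dense_in_space X (topspace X \<inter> \<Inter>\<N>')"
      using Baire small unfolding card_Baire_def by blast
    moreover have "\<Inter>\<N>' = \<Inter>\<N>"
      using 2 sub by blast
    ultimately show ?thesis
      by simp
  qed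
qed

theorem mainTheorem6:
  fixes X :: "'a topology" and \<N> :: "'a set set"
  assumes "continuum X"
    and "density_Baire X"
    and "\<forall>U\<in>\<N>. openin X U \<and> dense_in_space X U"
    and "\<forall>A\<in>\<N>. \<forall>B\<in>\<N>. A \<subseteq> B \<or> B \<subseteq> A"
  shows "dense_in_space X (topspace X \<inter> \<Inter>\<N>)"
proof -
  obtain D where "dense_in_space X D" "card_Baire X D"
    using assms(2) unfolding density_Baire_def by blast
  moreover have "chain\<^sub>\<subseteq> \<N>"
    using assms(4) unfolding chain_subset_def .
  ultimately show ?thesis
    by (intro card_Baire_chain_Inter_dense[OF _ _ _ assms(3)])
qed

end
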